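(* Let $G=(V,E)$ be a finite, connected, undirected graph with $n\ge2$ vertices and let $t=\phi(G)^2n^4$. (i) The expected absorption time of the Moran process on $G$ with $r=1$ (initial single mutant at a uniformly random vertex) is at most $t$. (ii) For any $\epsilon\in(0,1)$, this process reaches absorption within $t/\epsilon$ steps with probability at least $1-\epsilon$.
   Context: The Moran process on $G$ with mutant fitness $r>0$ is the Markov chain $(X_i)_{i\ge0}$ whose state $X_i\subseteq V$ is the set of vertices occupied by mutants; every other vertex is occupied by a non-mutant of fitness $1$. Write $W(S)=r|S|+|V\setminus S|$ for the total fitness. Given $X_i=S$, one step is: choose a vertex $x$ with probability $r/W(S)$ if $x\in S$ and $1/W(S)$ if $x\notin S$; then choose a neighbour $y$ of $x$ uniformly at random; set $X_{i+1}=S\cup\{y\}$ if $x\in S$ and $X_{i+1}=S\setminus\{y\}$ if $x\notin S$. Absorption means reaching $X_i=\emptyset$ or $X_i=V$. For $X\subseteq V$, $\phi(X)=\sum_{x\in X}\frac{1}{\deg x}$, and $\phi(G)=\phi(V)$. *)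

theory Defs
  imports "HOL-Probability.Probability"
begin

definition ugraph :: "'a set \<Rightarrow> ('a \<Rightarrow> 'a \<Rightarrow> bool) \<Rightarrow> bool" where
  "ugraph V E \<longleftrightarrow> finite V \<and> (\<forall>x y. E x y \<longrightarrow> x \<in> V \<and> y \<in> V)
     \<and> (\<forall>x y. E x y \<longrightarrow> E y x) \<and> (\<forall>x. \<not> E x x)"

definition connected_graph :: "'a set \<Rightarrow> ('a \<Rightarrow> 'a \<Rightarrow> bool) \<Rightarrow> bool" where
  "connected_graph V E \<longleftrightarrow> (\<forall>x\<in>V. \<forall>y\<in>V. (x, y) \<in> {(a, b). E a b}\<^sup>*)"

definition nbrs :: "'a set \<Rightarrow> ('a \<Rightarrow> 'a \<Rightarrow> bool) \<Rightarrow> 'a \<Rightarrow> 'a set" where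
  "nbrs V E x = {y \<in> V. E x y}"

definition deg :: "'a set \<Rightarrow> ('a \<Rightarrow> 'a \<Rightarrow> bool) \<Rightarrow> 'a \<Rightarrow> nat" where
  "deg V E x = card (nbrs V E x)"

definition phi :: "'a set \<Rightarrow> ('a \<Rightarrow> 'a \<Rightarrow> bool) \<Rightarrow> 'a set \<Rightarrow> real" where
  "phi V E X = (\<Sum>x\<in>X. 1 / real (deg V E x))"

definition total_fitness :: "'a set \<Rightarrow> real \<Rightarrow> 'a set \<Rightarrow> real" where
  "total_fitness V r S = r * real (card (S \<inter> V)) + real (card (V - S))"

definition moran_select :: "'a set \<Rightarrow> real \<Rightarrow> 'a set \<Rightarrow> 'a pmf" where
  "moran_select V r S = embed_pmf (\<lambda>x. if x \<in> V then (if x \<in> S then r else 1) / total_fitness V r S else 0)"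

definition moran_step :: "'a set \<Rightarrow> ('a \<Rightarrow> 'a \<Rightarrow> bool) \<Rightarrow> real \<Rightarrow> 'a set \<Rightarrow> 'a set pmf" where
  "moran_step V E r S =
     bind_pmf (moran_select V r S) (\<lambda>x.
     bind_pmf (pmf_of_set (nbrs V E x)) (\<lambda>y.
     return_pmf (if x \<in> S then S \<union> {y} else S - {y})))"

definition moran_init :: "'a set \<Rightarrow> 'a set pmf" where
  "moran_init V = map_pmf (\<lambda>v. {v}) (pmf_of_set V)"

definition moran_dist :: "'a set \<Rightarrow> ('a \<Rightarrow> 'a \<Rightarrow> bool) \<Rightarrow> real \<Rightarrow> nat \<Rightarrow> 'a set pmf" where
  "moran_dist V E r k = ((\<lambda>p. bind_pmf p (moran_step V E r)) ^^ k) (moran_init V)"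

text \<open>Since the states {} and V are absorbing, the absorption time T satisfies
  T \<le> k iff X_k \<in> {{}, V}.\<close>
definition prob_absorbed_by :: "'a set \<Rightarrow> ('a \<Rightarrow> 'a \<Rightarrow> bool) \<Rightarrow> real \<Rightarrow> nat \<Rightarrow> real" where
  "prob_absorbed_by V E r k = measure_pmf.prob (moran_dist V E r k) {S. S = {} \<or> S = V}"

text \<open>Expected absorption time E[T] = sum_{k\<ge>0} P(T > k) (in [0,\<infinity>]).\<close>
definition expected_absorption_time :: "'a set \<Rightarrow> ('a \<Rightarrow> 'a \<Rightarrow> bool) \<Rightarrow> real \<Rightarrow> ennreal" where
  "expected_absorption_time V E r = (\<Sum>k. ennreal (1 - prob_absorbed_by V E r k))"

end

theory Submission
  imports Defs
begin

(* For r = 1 a step picks a uniformly random arc (x, y), chosen with probability 1 / (n deg x),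
   and copies the type of x onto y. The resulting change ([x \<in> S] - [y \<in> S]) / deg y of phi,
   weighted by that probability, is antisymmetric under reversing the arc, so phi(X_k) is a
   martingale. Hence the potential psi(S) = phi(S) (phi(G) - phi(S)), which lies in [0, phi(G)^2],
   decreases in expectation by the variance of the increment of phi; an edge leaving S, which exists
   in every non-absorbing state of a connected graph, makes that variance at least 1 / n^4.
   Summing this additive drift bounds sum_k P(T > k) by phi(G)^2 n^4 = t, and since P(T > k) is
   non-increasing in k, P(T > k) \<le> \<epsilon> as soon as k + 1 > t / \<epsilon>. *)

lemma expectation_bind_pmf_bounded:
  fixes f :: "'b \<Rightarrow> real"
  assumes "\<And>x. \<bar>f x\<bar> \<le> B"
  shows "measure_pmf.expectation (bind_pmf M N) f =
    measure_pmf.expectation M (\<lambda>x. measure_pmf.expectation (N x) f)"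
  using measurable_measure_pmf[of N] unfolding measure_pmf_bind
  by (subst integral_bind[where K="count_space UNIV" and B=B and B'=1])
    (use assms in \<open>auto intro: measure_pmf.finite_measure simp: measure_pmf.emeasure_space_1\<close>)

lemma abs_expectation_le_bound:
  fixes f :: "'b \<Rightarrow> real"
  assumes "\<And>x. \<bar>f x\<bar> \<le> B"
  shows "\<bar>measure_pmf.expectation M f\<bar> \<le> B"
proof -
  have "0 \<le> B"
    using abs_ge_zero[of "f undefined"] assms[of undefined] by linarith
  have "\<bar>measure_pmf.expectation M f\<bar> \<le> measure_pmf.expectation M (\<lambda>x. \<bar>f x\<bar>)"
    by (rule integral_abs_bound)
  also have "\<dots> \<le> measure_pmf.expectation M (\<lambda>x. B)"
    using assms \<open>0 \<le> B\<close> by (intro integral_mono measure_pmf.integrable_const_bound[where B=B]) auto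
  also have "\<dots> = B"
    by simp
  finally show ?thesis .
qed

lemma integrable_pmf_bounded:
  fixes f :: "'b \<Rightarrow> real"
  assumes "\<And>x. \<bar>f x\<bar> \<le> B"
  shows "integrable (measure_pmf M) f"
  using assms by (intro measure_pmf.integrable_const_bound[where B=B]) auto

lemma expectation_mult_diff_eq:
  fixes f :: "'b \<Rightarrow> real"
  assumes "finite (set_pmf M)" and mean: "measure_pmf.expectation M f = a"
  shows "measure_pmf.expectation M (\<lambda>x. f x * (c - f x)) =
    a * (c - a) - measure_pmf.expectation M (\<lambda>x. (f x - a)\<^sup>2)"
proof -
  have int: "integrable M g" for g :: "'b \<Rightarrow> real"
    using assms(1) by (rule integrable_measure_pmf_finite)
  have "(\<lambda>x. f x * (c - f x)) = (\<lambda>x. a * (c - a) + (c - 2 * a) * (f x - a) - (f x - a)\<^sup>2)"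
    by (auto simp: fun_eq_iff power2_eq_square algebra_simps)
  then show ?thesis
    using mean by (simp add: int Bochner_Integration.integral_diff Bochner_Integration.integral_add)
qed

lemma set_pmf_funpow_bind_subset:
  assumes "set_pmf p \<subseteq> I" and "\<And>S. S \<in> I \<Longrightarrow> set_pmf (K S) \<subseteq> I"
  shows "set_pmf (((\<lambda>p. bind_pmf p K) ^^ k) p) \<subseteq> I"
  by (induction k) (use assms in auto)

lemma expectation_funpow_bind_Suc_le:
  fixes f g :: "'s \<Rightarrow> real"
  assumes "set_pmf p \<subseteq> I" and "\<And>S. S \<in> I \<Longrightarrow> set_pmf (K S) \<subseteq> I"
    and f_bound: "\<And>S. \<bar>f S\<bar> \<le> B" and g_bound: "\<And>S. \<bar>g S\<bar> \<le> B'"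
    and step: "\<And>S. S \<in> I \<Longrightarrow> measure_pmf.expectation (K S) f \<le> g S"
  shows "measure_pmf.expectation (((\<lambda>p. bind_pmf p K) ^^ Suc k) p) f
    \<le> measure_pmf.expectation (((\<lambda>p. bind_pmf p K) ^^ k) p) g"
proof -
  let ?p = "((\<lambda>p. bind_pmf p K) ^^ k) p"
  have "measure_pmf.expectation (bind_pmf ?p K) f =
      measure_pmf.expectation ?p (\<lambda>S. measure_pmf.expectation (K S) f)"
    using f_bound by (rule expectation_bind_pmf_bounded)
  also have "\<dots> \<le> measure_pmf.expectation ?p g"
  proof (rule integral_mono_AE)
    show "integrable ?p (\<lambda>S. measure_pmf.expectation (K S) f)"
      using abs_expectation_le_bound[where f=f, OF f_bound] by (rule integrable_pmf_bounded)
    show "integrable ?p g"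
      using g_bound by (rule integrable_pmf_bounded)
    show "AE S in ?p. measure_pmf.expectation (K S) f \<le> g S"
      using set_pmf_funpow_bind_subset[of p I K k, OF assms(1,2)] step
      by (auto simp: AE_measure_pmf_iff)
  qed
  finally show ?thesis by simp
qed

lemma additive_drift_partial_sum_le:
  fixes h q :: "'s \<Rightarrow> real"
  assumes "set_pmf p \<subseteq> I" and "\<And>S. S \<in> I \<Longrightarrow> set_pmf (K S) \<subseteq> I"
    and h_nonneg: "\<And>S. 0 \<le> h S" and h_le: "\<And>S. h S \<le> H"
    and q_bound: "\<And>S. \<bar>q S\<bar> \<le> B" and "0 < c"
    and drift: "\<And>S. S \<in> I \<Longrightarrow> measure_pmf.expectation (K S) h \<le> h S - c * q S"
  shows "(\<Sum>k<n. measure_pmf.expectation (((\<lambda>p. bind_pmf p K) ^^ k) p) q) \<le> H / c"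
proof -
  let ?E = "\<lambda>k f. measure_pmf.expectation (((\<lambda>p. bind_pmf p K) ^^ k) p) f"
  have h_bound: "\<bar>h S\<bar> \<le> H" for S
    using h_nonneg h_le by (simp add: abs_le_iff order_trans[OF _ h_nonneg])
  have step: "?E (Suc k) h \<le> ?E k h - c * ?E k q" for k
  proof -
    have "?E (Suc k) h \<le> ?E k (\<lambda>S. h S - c * q S)"
    proof (rule expectation_funpow_bind_Suc_le[OF assms(1,2) h_bound _ drift])
      show "\<bar>h S - c * q S\<bar> \<le> H + c * B" for S
      proof -
        have "\<bar>c * q S\<bar> \<le> c * B"
          using q_bound[of S] \<open>0 < c\<close> by (simp add: abs_mult)
        then show ?thesis
          using h_bound[of S] abs_triangle_ineq4[of "h S" "c * q S"] by linarith
      qed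
    qed
    also have "\<dots> = ?E k h - c * ?E k q"
      using integrable_pmf_bounded[where f=h, OF h_bound]
        integrable_pmf_bounded[where f=q, OF q_bound]
      by simp
    finally show ?thesis .
  qed
  have "c * (\<Sum>k<n. ?E k q) \<le> ?E 0 h - ?E n h"
  proof (induction n)
    case (Suc n)
    then show ?case
      using step[of n] unfolding sum.lessThan_Suc distrib_left by linarith
  qed simp
  also have "\<dots> \<le> H"
  proof -
    have "?E 0 h \<le> H"
      using abs_expectation_le_bound[where f=h, OF h_bound] by (rule abs_le_D1)
    moreover have "0 \<le> ?E n h"
      using h_nonneg by (simp add: integral_nonneg)
    ultimately show ?thesis
      by linarith
  qed
  finally show ?thesis
    using \<open>0 < c\<close> by (simp add: field_simps mult.commute)
qed

lemma decseq_le_of_partial_sums_le: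
  fixes q :: "nat \<Rightarrow> real"
  assumes "decseq q" and sums: "\<And>n. (\<Sum>k<n. q k) \<le> t" and "0 \<le> t" "0 < \<epsilon>"
  shows "q (nat \<lfloor>t / \<epsilon>\<rfloor>) \<le> \<epsilon>"
proof -
  define K where "K = nat \<lfloor>t / \<epsilon>\<rfloor>"
  have "(real K + 1) * q K = (\<Sum>k<Suc K. q K)"
    by simp
  also have "\<dots> \<le> (\<Sum>k<Suc K. q k)"
    using \<open>decseq q\<close> by (intro sum_mono) (auto simp: decseq_def)
  also have "\<dots> \<le> t"
    by (rule sums)
  also have "t < (real K + 1) * \<epsilon>"
  proof -
    have "t / \<epsilon> < real K + 1"
      using assms(3,4) unfolding K_def by linarith
    then show ?thesis
      using \<open>0 < \<epsilon>\<close> by (simp add: divide_less_eq)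
  qed
  finally show ?thesis
    unfolding K_def by (simp add: mult_less_cancel_left_pos)
qed

lemma suminf_ennreal_le_of_partial_sums_le:
  fixes f :: "nat \<Rightarrow> real"
  assumes "\<And>k. 0 \<le> f k" and "\<And>n. (\<Sum>k<n. f k) \<le> t"
  shows "(\<Sum>k. ennreal (f k)) \<le> ennreal t"
  unfolding suminf_eq_SUP
proof (rule SUP_least)
  show "(\<Sum>k<n. ennreal (f k)) \<le> ennreal t" for n
    using assms by (simp add: ennreal_leI)
qed

lemma sum_antisymmetric_eq_0:
  fixes f :: "'a \<Rightarrow> 'a \<Rightarrow> real"
  assumes "\<And>x y. (x, y) \<in> A \<Longrightarrow> (y, x) \<in> A"
    and "\<And>x y. (x, y) \<in> A \<Longrightarrow> f y x = - f x y"
  shows "(\<Sum>(x, y)\<in>A. f x y) = 0"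
proof -
  have "(\<Sum>(x, y)\<in>A. f x y) = (\<Sum>(x, y)\<in>A. f y x)"
    by (rule sum.reindex_bij_witness[where i=prod.swap and j=prod.swap]) (auto intro: assms(1))
  also have "\<dots> = - (\<Sum>(x, y)\<in>A. f x y)"
    using assms(2) by (simp add: case_prod_beta sum_negf[symmetric] cong: sum.cong)
  finally show ?thesis
    by linarith
qed

lemma rtrancl_crossing_pair:
  assumes "(a, b) \<in> R\<^sup>*" and "a \<in> S" and "b \<notin> S"
  obtains x y where "(x, y) \<in> R" and "x \<in> S" and "y \<notin> S"
  using assms by (induction rule: rtrancl_induct) auto

definition arcs :: "'a set \<Rightarrow> ('a \<Rightarrow> 'a \<Rightarrow> bool) \<Rightarrow> ('a \<times> 'a) set" where
  "arcs V E = Sigma V (nbrs V E)"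

definition moran_update :: "'a set \<Rightarrow> 'a \<Rightarrow> 'a \<Rightarrow> 'a set" where
  "moran_update S x y = (if x \<in> S then S \<union> {y} else S - {y})"

definition moran_potential :: "'a set \<Rightarrow> ('a \<Rightarrow> 'a \<Rightarrow> bool) \<Rightarrow> 'a set \<Rightarrow> real" where
  "moran_potential V E S = phi V E S * (phi V E V - phi V E S)"

context
  fixes V :: "'a set" and E :: "'a \<Rightarrow> 'a \<Rightarrow> bool"
  assumes graph: "ugraph V E" and connected: "connected_graph V E" and two_le_card: "2 \<le> card V"
begin

lemma finite_vertices: "finite V"
  using graph by (simp add: ugraph_def)

lemma card_vertices_pos: "0 < card V"
  using two_le_card by simp

lemma vertices_nonempty: "V \<noteq> {}"
  using card_vertices_pos by auto

lemma nbrs_subset: "nbrs V E x \<subseteq> V"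
  by (auto simp: nbrs_def)

lemma edge_vertices: "E x y \<Longrightarrow> x \<in> V \<and> y \<in> V"
  using graph by (simp add: ugraph_def)

lemma edge_sym: "E x y \<Longrightarrow> E y x"
  using graph by (simp add: ugraph_def)

lemma arcs_iff: "(x, y) \<in> arcs V E \<longleftrightarrow> E x y"
  using edge_vertices by (auto simp: arcs_def nbrs_def)

lemma finite_nbrs: "finite (nbrs V E x)"
  using finite_vertices by (simp add: nbrs_def)

lemma nbrs_nonempty:
  assumes "x \<in> V"
  shows "nbrs V E x \<noteq> {}"
proof -
  obtain y where "y \<in> V" "y \<noteq> x"
    using two_le_card finite_vertices assms
    by (metis card_le_Suc0_iff_eq not_less_eq_eq numeral_2_eq_2)
  then have "(x, y) \<in> {(a, b). E a b}\<^sup>*" "x \<noteq> y"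
    using connected assms by (auto simp: connected_graph_def)
  then obtain z where "E x z"
    by (auto elim: converse_rtranclE)
  then show ?thesis
    using arcs_iff by (auto simp: arcs_def)
qed

lemma deg_pos: "x \<in> V \<Longrightarrow> 0 < deg V E x"
  using nbrs_nonempty finite_nbrs by (simp add: deg_def card_gt_0_iff)

lemma deg_le_card: "deg V E x \<le> card V"
  unfolding deg_def nbrs_def using finite_vertices by (intro card_mono) auto

lemma phi_nonneg: "0 \<le> phi V E S"
  unfolding phi_def by (intro sum_nonneg) simp

lemma phi_le_phi_vertices: "phi V E S \<le> phi V E V"
proof (cases "finite S")
  case True
  have "nbrs V E x = {}" if "x \<notin> V" for x
    using that edge_vertices by (auto simp: nbrs_def)
  then have "deg V E x = 0" if "x \<notin> V" for x
    using that by (simp add: deg_def)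
  then have "phi V E S = phi V E (S \<inter> V)"
    unfolding phi_def using True by (intro sum.mono_neutral_right) auto
  also have "\<dots> \<le> phi V E V"
    unfolding phi_def using finite_vertices by (intro sum_mono2) auto
  finally show ?thesis .
next
  case False
  then show ?thesis
    using phi_nonneg[of V] by (simp add: phi_def)
qed

lemma moran_potential_nonneg: "0 \<le> moran_potential V E S"
  unfolding moran_potential_def using phi_nonneg phi_le_phi_vertices by simp

lemma moran_potential_le: "moran_potential V E S \<le> (phi V E V)\<^sup>2"
  unfolding moran_potential_def power2_eq_square
  using phi_nonneg phi_le_phi_vertices by (intro mult_mono) auto

lemma moran_select_neutral: "moran_select V 1 S = pmf_of_set V"
proof -
  have "card (S \<inter> V) + card (V - S) = card V"
    using finite_vertices by (metis Int_commute card_Int_Diff)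
  then have "total_fitness V 1 S = real (card V)"
    unfolding total_fitness_def by (simp flip: of_nat_add)
  then have "(\<lambda>x. if x \<in> V then (if x \<in> S then 1 else 1) / total_fitness V 1 S else 0) =
      pmf (pmf_of_set V)"
    using finite_vertices vertices_nonempty by (auto simp: fun_eq_iff)
  then show ?thesis
    unfolding moran_select_def by (simp add: type_definition.Rep_inverse[OF td_pmf_embed_pmf])
qed

lemma moran_step_neutral:
  "moran_step V E 1 S = pmf_of_set V \<bind>
     (\<lambda>x. pmf_of_set (nbrs V E x) \<bind> (\<lambda>y. return_pmf (moran_update S x y)))"
  unfolding moran_step_def moran_select_neutral moran_update_def ..

lemma expectation_moran_step:
  fixes g :: "'a set \<Rightarrow> real"
  shows "measure_pmf.expectation (moran_step V E 1 S) g =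
    (\<Sum>(x, y)\<in>arcs V E. g (moran_update S x y) / (real (card V) * real (deg V E x)))"
proof -
  have "measure_pmf.expectation (moran_step V E 1 S) g =
      (\<Sum>x\<in>V. \<Sum>y\<in>nbrs V E x. g (moran_update S x y) / (real (card V) * real (deg V E x)))"
    unfolding moran_step_neutral using finite_vertices vertices_nonempty nbrs_nonempty finite_nbrs
    by (simp add: pmf_expectation_bind_pmf_of_set deg_def sum_distrib_left divide_inverse mult_ac)
  also have "\<dots> = (\<Sum>(x, y)\<in>arcs V E. g (moran_update S x y) / (real (card V) * real (deg V E x)))"
    unfolding arcs_def using finite_vertices finite_nbrs by (subst sum.Sigma) auto
  finally show ?thesis .
qed

lemma set_pmf_moran_step:
  "set_pmf (moran_step V E 1 S) = (\<Union>x\<in>V. \<Union>y\<in>nbrs V E x. {moran_update S x y})"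
  unfolding moran_step_neutral using finite_vertices vertices_nonempty nbrs_nonempty finite_nbrs
  by simp

lemma finite_set_pmf_moran_step: "finite (set_pmf (moran_step V E 1 S))"
  unfolding set_pmf_moran_step using finite_vertices finite_nbrs by simp

lemma set_pmf_moran_step_subset: "S \<subseteq> V \<Longrightarrow> set_pmf (moran_step V E 1 S) \<subseteq> Pow V"
  unfolding set_pmf_moran_step
  by (auto simp: moran_update_def dest: nbrs_subset[THEN subsetD] split: if_splits)

lemma set_pmf_moran_init: "set_pmf (moran_init V) \<subseteq> Pow V"
  unfolding moran_init_def using finite_vertices vertices_nonempty by auto

lemma moran_step_absorbing:
  assumes "S = {} \<or> S = V"
  shows "moran_step V E 1 S = return_pmf S"
proof -
  have "moran_step V E 1 S =
      pmf_of_set V \<bind> (\<lambda>x. pmf_of_set (nbrs V E x) \<bind> (\<lambda>y. return_pmf S))"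
    unfolding moran_step_neutral
  proof (intro bind_pmf_cong refl)
    fix x y
    assume "x \<in> set_pmf (pmf_of_set V)" and "y \<in> set_pmf (pmf_of_set (nbrs V E x))"
    then have "x \<in> V" "y \<in> V"
      using finite_vertices vertices_nonempty nbrs_nonempty finite_nbrs nbrs_subset by auto
    then show "return_pmf (moran_update S x y) = return_pmf S"
      using assms by (auto simp: moran_update_def)
  qed
  then show ?thesis
    by simp
qed

lemma phi_moran_update:
  assumes "S \<subseteq> V" and "y \<in> V"
  shows "phi V E (moran_update S x y) =
    phi V E S + (indicator S x - indicator S y) / real (deg V E y)"
proof -
  have "finite S"
    using assms(1) finite_vertices by (rule finite_subset)
  then show ?thesis
    by (cases "x \<in> S"; cases "y \<in> S")
      (auto simp: moran_update_def phi_def insert_absorb sum_diff1 diff_divide_distrib)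
qed

lemma expectation_moran_step_phi:
  assumes "S \<subseteq> V"
  shows "measure_pmf.expectation (moran_step V E 1 S) (phi V E) = phi V E S"
proof -
  define w where "w x = real (card V) * real (deg V E x)" for x
  define d where "d x y = (indicator S x - indicator S y) / real (deg V E y)" for x y :: 'a
  have "measure_pmf.expectation (moran_step V E 1 S) (phi V E) =
      (\<Sum>(x, y)\<in>arcs V E. (phi V E S + d x y) / w x)"
    unfolding expectation_moran_step w_def d_def using assms
    by (intro sum.cong) (auto simp: phi_moran_update arcs_iff edge_vertices)
  also have "\<dots> = (\<Sum>(x, y)\<in>arcs V E. phi V E S / w x) + (\<Sum>(x, y)\<in>arcs V E. d x y / w x)"
    by (simp add: add_divide_distrib sum.distrib case_prod_beta)
  also have "(\<Sum>(x, y)\<in>arcs V E. d x y / w x) = 0"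
  proof (rule sum_antisymmetric_eq_0)
    show "(y, x) \<in> arcs V E" if "(x, y) \<in> arcs V E" for x y
      using that by (simp add: arcs_iff edge_sym)
    show "d y x / w y = - (d x y / w x)" for x y
      unfolding d_def w_def by (simp add: divide_divide_eq_left minus_divide_left algebra_simps)
  qed
  also have "(\<Sum>(x, y)\<in>arcs V E. phi V E S / w x) = phi V E S"
    using expectation_moran_step[of S "\<lambda>_. phi V E S"] by (simp add: w_def)
  finally show ?thesis
    by simp
qed

lemma expectation_moran_step_phi_increment_sq_ge:
  assumes "S \<subseteq> V" and "S \<noteq> {}" and "S \<noteq> V"
  shows "1 / real (card V) ^ 4 \<le>
    measure_pmf.expectation (moran_step V E 1 S) (\<lambda>T. (phi V E T - phi V E S)\<^sup>2)"
proof -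
  let ?n = "real (card V)"
  define F where
    "F = (\<lambda>(x, y). (phi V E (moran_update S x y) - phi V E S)\<^sup>2 / (?n * real (deg V E x)))"
  obtain a b where "a \<in> S" "b \<in> V" "b \<notin> S"
    using assms by blast
  then have "(a, b) \<in> {(u, v). E u v}\<^sup>*"
    using connected assms(1) by (auto simp: connected_graph_def)
  then obtain x y where "E x y" "x \<in> S" "y \<notin> S"
    using \<open>a \<in> S\<close> \<open>b \<notin> S\<close> by (rule rtrancl_crossing_pair) auto
  then have xy: "(x, y) \<in> arcs V E" "x \<in> V" "y \<in> V"
    using arcs_iff edge_vertices by auto
  have "1 / ?n ^ 4 \<le> 1 / (real (deg V E y))\<^sup>2 / (?n * real (deg V E x))"
  proof -
    have "real (deg V E y) ^ 2 * (?n * real (deg V E x)) \<le> ?n ^ 2 * (?n * ?n)"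
      using deg_le_card[of x] deg_le_card[of y]
      by (intro mult_mono power_mono mult_left_mono) auto
    moreover have "0 < real (deg V E y) ^ 2 * (?n * real (deg V E x))"
      using deg_pos xy card_vertices_pos by simp
    ultimately show ?thesis
      by (simp add: frac_le eval_nat_numeral)
  qed
  also have "\<dots> = F (x, y)"
    using xy \<open>x \<in> S\<close> \<open>y \<notin> S\<close> assms(1) by (simp add: F_def phi_moran_update power_divide)
  also have "\<dots> \<le> (\<Sum>p\<in>arcs V E. F p)"
    using xy(1) by (rule member_le_sum) (auto simp: F_def arcs_def finite_vertices finite_nbrs)
  also have "\<dots> = measure_pmf.expectation (moran_step V E 1 S) (\<lambda>T. (phi V E T - phi V E S)\<^sup>2)"
    unfolding expectation_moran_step F_def ..
  finally show ?thesis .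
qed

lemma expectation_moran_step_potential_le:
  assumes "S \<subseteq> V"
  shows "measure_pmf.expectation (moran_step V E 1 S) (moran_potential V E)
    \<le> moran_potential V E S - indicator (- {{}, V}) S / real (card V) ^ 4"
proof -
  let ?var = "measure_pmf.expectation (moran_step V E 1 S) (\<lambda>T. (phi V E T - phi V E S)\<^sup>2)"
  have "measure_pmf.expectation (moran_step V E 1 S) (moran_potential V E) =
      moran_potential V E S - ?var"
    unfolding moran_potential_def
    using finite_set_pmf_moran_step expectation_moran_step_phi[OF assms]
    by (rule expectation_mult_diff_eq)
  moreover have "indicator (- {{}, V}) S / real (card V) ^ 4 \<le> ?var"
    using expectation_moran_step_phi_increment_sq_ge[OF assms]
    by (cases "S = {} \<or> S = V") (auto intro: integral_nonneg)
  ultimately show ?thesis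
    by simp
qed

lemma one_minus_prob_absorbed_by:
  "1 - prob_absorbed_by V E 1 k =
    measure_pmf.expectation (moran_dist V E 1 k) (indicator (- {{}, V}))"
proof -
  have "- {{}, V} = UNIV - {S. S = {} \<or> S = V}"
    by auto
  then show ?thesis
    unfolding prob_absorbed_by_def
    using measure_pmf.prob_compl[of "{S. S = {} \<or> S = V}" "moran_dist V E 1 k"] by simp
qed

lemma moran_nonabsorbed_partial_sum_le:
  "(\<Sum>k<n. 1 - prob_absorbed_by V E 1 k) \<le> (phi V E V)\<^sup>2 * real (card V) ^ 4"
proof -
  have "(\<Sum>k<n. measure_pmf.expectation (moran_dist V E 1 k) (indicator (- {{}, V})))
      \<le> (phi V E V)\<^sup>2 / (1 / real (card V) ^ 4)"
    unfolding moran_dist_def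
  proof (rule additive_drift_partial_sum_le[where I="Pow V" and B=1])
    show "measure_pmf.expectation (moran_step V E 1 S) (moran_potential V E)
        \<le> moran_potential V E S - 1 / real (card V) ^ 4 * indicator (- {{}, V}) S"
      if "S \<in> Pow V" for S
      using expectation_moran_step_potential_le[of S] that by simp
  qed (use set_pmf_moran_init set_pmf_moran_step_subset moran_potential_nonneg moran_potential_le
       card_vertices_pos in auto)
  then show ?thesis
    by (simp add: one_minus_prob_absorbed_by)
qed

lemma moran_nonabsorbed_decseq: "decseq (\<lambda>k. 1 - prob_absorbed_by V E 1 k)"
proof (rule decseq_SucI)
  fix k
  have "measure_pmf.expectation (moran_dist V E 1 (Suc k)) (indicator (- {{}, V}))
      \<le> measure_pmf.expectation (moran_dist V E 1 k) (indicator (- {{}, V}) :: 'a set \<Rightarrow> real)"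
    unfolding moran_dist_def
  proof (rule expectation_funpow_bind_Suc_le[where I="Pow V" and B=1 and B'=1])
    show "measure_pmf.expectation (moran_step V E 1 S) (indicator (- {{}, V}))
        \<le> (indicator (- {{}, V}) S :: real)" for S
    proof (cases "S = {} \<or> S = V")
      case True
      then show ?thesis
        by (simp add: moran_step_absorbing expectation_return_pmf)
    next
      case False
      then show ?thesis
        using abs_expectation_le_bound[of "indicator (- {{}, V})" 1 "moran_step V E 1 S"]
        by (auto split: split_indicator)
    qed
  qed (use set_pmf_moran_init set_pmf_moran_step_subset in auto)
  then show "1 - prob_absorbed_by V E 1 (Suc k) \<le> 1 - prob_absorbed_by V E 1 k"
    by (simp add: one_minus_prob_absorbed_by)
qed

end

theorem corollary10:
  fixes V :: "'a set" and E :: "'a \<Rightarrow> 'a \<Rightarrow> bool"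
  assumes "ugraph V E" and "connected_graph V E" and "card V \<ge> 2"
  defines "t \<equiv> (phi V E V)^2 * real (card V)^4"
  shows "expected_absorption_time V E 1 \<le> ennreal t \<and>
         (\<forall>\<epsilon>::real. 0 < \<epsilon> \<and> \<epsilon> < 1 \<longrightarrow>
           prob_absorbed_by V E 1 (nat \<lfloor>t / \<epsilon>\<rfloor>) \<ge> 1 - \<epsilon>)"
proof -
  have sums: "(\<Sum>k<n. 1 - prob_absorbed_by V E 1 k) \<le> t" for n
    unfolding t_def using assms(1-3) by (rule moran_nonabsorbed_partial_sum_le)
  have nonneg: "0 \<le> 1 - prob_absorbed_by V E 1 k" for k
    by (simp add: prob_absorbed_by_def)
  have "expected_absorption_time V E 1 \<le> ennreal t"
    unfolding expected_absorption_time_def using nonneg sums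
    by (rule suminf_ennreal_le_of_partial_sums_le)
  moreover have "1 - \<epsilon> \<le> prob_absorbed_by V E 1 (nat \<lfloor>t / \<epsilon>\<rfloor>)" if "0 < \<epsilon>" for \<epsilon>
    using decseq_le_of_partial_sums_le[OF moran_nonabsorbed_decseq[OF assms(1-3)] sums _ that]
    by (simp add: t_def)
  ultimately show ?thesis
    by blast
qed

end
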